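(* Let $\Phi$ be a second-order constraint problem and $J$ an interpretation of the index symbols. (1) Soundness: if $J\models\mathrm{sk}(\Phi)$, then $(J,\xi_{sk})$ is a model of $\Phi$. (2) Completeness: if $(J,\xi)$ is a model of $\Phi$ for some second-order substitution $\xi$, then $J'\models\mathrm{sk}(\Phi)$ for some interpretation $J'$ extending $J$ to the skolem functions $f_\alpha$.
   Context: Index terms over index variables $i$ and index symbols $g$ (including $0,\mathsf s,+$); an interpretation $J$ maps each $k$-ary $g$ to a total weakly monotone function $\mathbb N^k\to\mathbb N$ ($0,\mathsf s,+$ standard); $a\le_J b$ iff $[a]^\beta_J\le[b]^\beta_J$ for every assignment $\beta$. Second-order index terms: $a::=i\mid\alpha\mid g(a_1,\dots,a_{\mathrm{ar}(g)})$ with $\alpha$ second-order index variables; $\mathrm{Var}(a)$ and $\mathrm{SOVar}(a)$ are the sets of first- and second-order variables of $a$. An SOCP $\Phi$ is a set of inequalities $a\le b$ and occurrence constraints $i\notin\alpha$. A second-order substitution $\xi$ maps second-order variables to index terms without second-order variables. $(J,\xi)$ is a model of $\Phi$ if $a\xi\le_J b\xi$ for all inequalities and $i\notin\mathrm{Var}(\xi(\alpha))$ for all occurrence constraints in $\Phi$. A first-order constraint problem (FOCP) is a set of inequalities without second-order variables; $J\models\Psi$ means $a\le_J b$ for all $(a\le b)\in\Psi$. Skolemisation: let $V(\beta)$ (for second-order variables $\beta$ of $\Phi$) be the least sets with, for every $(a\le b)\in\Phi$ such that $\beta\in\mathrm{SOVar}(b)$, $\mathrm{Var}(a)\subseteq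 V(\beta)$ and $V(\alpha)\subseteq V(\beta)$ for each $\alpha\in\mathrm{SOVar}(a)$; set $\mathrm{SV}(\beta)=V(\beta)\setminus\{i\mid(i\notin\beta)\in\Phi\}$. For each second-order variable $\alpha$ of $\Phi$ let $f_\alpha$ be a fresh index symbol of arity $|\mathrm{SV}(\alpha)|$; the skolem substitution is $\xi_{sk}(\alpha)=f_\alpha(i_1,\dots,i_k)$ where $\mathrm{SV}(\alpha)=\{i_1,\dots,i_k\}$ (in a fixed order). The skolemisation of $\Phi$ is the FOCP $\mathrm{sk}(\Phi)=\{a\xi_{sk}\le b\xi_{sk}\mid(a\le b)\in\Phi\}$. *)

theory Defs
  imports Main
begin

text \<open>The symbols 0, s, + are built in
as dedicated constructors and always receive their standard meaning.\<close>

datatype ('g,'v,'w) itm =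
    IV 'v
  | SOV 'w
  | IZ
  | IS "('g,'v,'w) itm"
  | IP "('g,'v,'w) itm" "('g,'v,'w) itm"
  | IA 'g "('g,'v,'w) itm list"

fun vars :: "('g,'v,'w) itm \<Rightarrow> 'v set" where
  "vars (IV i) = {i}"
| "vars (SOV a) = {}"
| "vars IZ = {}"
| "vars (IS t) = vars t"
| "vars (IP s t) = vars s \<union> vars t"
| "vars (IA g ts) = \<Union> (set (map vars ts))"

fun sovars :: "('g,'v,'w) itm \<Rightarrow> 'w set" where
  "sovars (IV i) = {}"
| "sovars (SOV a) = {a}"
| "sovars IZ = {}"
| "sovars (IS t) = sovars t"
| "sovars (IP s t) = sovars s \<union> sovars t"
| "sovars (IA g ts) = \<Union> (set (map sovars ts))"

fun wf_tm :: "('g \<Rightarrow> nat) \<Rightarrow> ('g,'v,'w) itm \<Rightarrow> bool" where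
  "wf_tm ar (IV i) = True"
| "wf_tm ar (SOV a) = True"
| "wf_tm ar IZ = True"
| "wf_tm ar (IS t) = wf_tm ar t"
| "wf_tm ar (IP s t) = (wf_tm ar s \<and> wf_tm ar t)"
| "wf_tm ar (IA g ts) = (length ts = ar g \<and> list_all id (map (wf_tm ar) ts))"

fun subst :: "('w \<Rightarrow> ('g,'v,'w) itm) \<Rightarrow> ('g,'v,'w) itm \<Rightarrow> ('g,'v,'w) itm" where
  "subst \<xi> (IV i) = IV i"
| "subst \<xi> (SOV a) = \<xi> a"
| "subst \<xi> IZ = IZ"
| "subst \<xi> (IS t) = IS (subst \<xi> t)"
| "subst \<xi> (IP s t) = IP (subst \<xi> s) (subst \<xi> t)"
| "subst \<xi> (IA g ts) = IA g (map (subst \<xi>) ts)"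

text \<open>Evaluation [a]^beta_J (second-order variables never occur in the terms
this is applied to; they are mapped to 0 only for totality).\<close>
fun eval :: "('g \<Rightarrow> nat list \<Rightarrow> nat) \<Rightarrow> ('v \<Rightarrow> nat) \<Rightarrow> ('g,'v,'w) itm \<Rightarrow> nat" where
  "eval J \<beta> (IV i) = \<beta> i"
| "eval J \<beta> (SOV a) = 0"
| "eval J \<beta> IZ = 0"
| "eval J \<beta> (IS t) = Suc (eval J \<beta> t)"
| "eval J \<beta> (IP s t) = eval J \<beta> s + eval J \<beta> t"
| "eval J \<beta> (IA g ts) = J g (map (eval J \<beta>) ts)"

text \<open>An interpretation maps each k-ary symbol to a (total) weakly monotone
function N^k -> N (represented on argument lists of length k).\<close>
definition interp :: "('g \<Rightarrow> nat) \<Rightarrow> ('g \<Rightarrow> nat list \<Rightarrow> nat) \<Rightarrow> bool" where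
  "interp ar J \<longleftrightarrow> (\<forall>g xs ys. length xs = ar g \<longrightarrow> length ys = ar g \<longrightarrow>
       list_all2 (\<le>) xs ys \<longrightarrow> J g xs \<le> J g ys)"

definition le_J :: "('g \<Rightarrow> nat list \<Rightarrow> nat) \<Rightarrow> ('g,'v,'w) itm \<Rightarrow> ('g,'v,'w) itm \<Rightarrow> bool" where
  "le_J J a b \<longleftrightarrow> (\<forall>\<beta>. eval J \<beta> a \<le> eval J \<beta> b)"

datatype ('g,'v,'w) constr =
    Le "('g,'v,'w) itm" "('g,'v,'w) itm"
  | NotIn 'v 'w

definition wf_socp :: "('g \<Rightarrow> nat) \<Rightarrow> ('g,'v,'w) constr set \<Rightarrow> bool" where
  "wf_socp ar \<Phi> \<longleftrightarrow> (\<forall>a b. Le a b \<in> \<Phi> \<longrightarrow> wf_tm ar a \<and> wf_tm ar b)"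

definition so_subst :: "('g \<Rightarrow> nat) \<Rightarrow> ('w \<Rightarrow> ('g,'v,'w) itm) \<Rightarrow> bool" where
  "so_subst ar \<xi> \<longleftrightarrow> (\<forall>a. sovars (\<xi> a) = {} \<and> wf_tm ar (\<xi> a))"

definition is_model ::
  "('g \<Rightarrow> nat list \<Rightarrow> nat) \<Rightarrow> ('w \<Rightarrow> ('g,'v,'w) itm) \<Rightarrow> ('g,'v,'w) constr set \<Rightarrow> bool" where
  "is_model J \<xi> \<Phi> \<longleftrightarrow>
     (\<forall>a b. Le a b \<in> \<Phi> \<longrightarrow> le_J J (subst \<xi> a) (subst \<xi> b)) \<and>
     (\<forall>i \<alpha>. NotIn i \<alpha> \<in> \<Phi> \<longrightarrow> i \<notin> vars (\<xi> \<alpha>))"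

definition fo_models :: "('g \<Rightarrow> nat list \<Rightarrow> nat) \<Rightarrow> ('g,'v,'w) constr set \<Rightarrow> bool" where
  "fo_models J \<Psi> \<longleftrightarrow> (\<forall>a b. Le a b \<in> \<Psi> \<longrightarrow> le_J J a b)"

inductive inV :: "('g,'v,'w) constr set \<Rightarrow> 'w \<Rightarrow> 'v \<Rightarrow> bool" for \<Phi> where
  base: "Le a b \<in> \<Phi> \<Longrightarrow> \<beta> \<in> sovars b \<Longrightarrow> i \<in> vars a \<Longrightarrow> inV \<Phi> \<beta> i"
| step: "Le a b \<in> \<Phi> \<Longrightarrow> \<beta> \<in> sovars b \<Longrightarrow> \<alpha> \<in> sovars a \<Longrightarrow> inV \<Phi> \<alpha> i \<Longrightarrow> inV \<Phi> \<beta> i"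

definition Vset :: "('g,'v,'w) constr set \<Rightarrow> 'w \<Rightarrow> 'v set" where
  "Vset \<Phi> \<beta> = {i. inV \<Phi> \<beta> i}"

definition SV :: "('g,'v,'w) constr set \<Rightarrow> 'w \<Rightarrow> 'v set" where
  "SV \<Phi> \<beta> = Vset \<Phi> \<beta> - {i. NotIn i \<beta> \<in> \<Phi>}"

text \<open>The extended signature: original symbols Inl g, skolem symbols
f_alpha = Inr alpha.  ord alpha lists SV(alpha) in the fixed order.\<close>
definition sk_arity :: "('g \<Rightarrow> nat) \<Rightarrow> ('w \<Rightarrow> 'v list) \<Rightarrow> 'g + 'w \<Rightarrow> nat" where
  "sk_arity ar ord = case_sum ar (\<lambda>\<alpha>. length (ord \<alpha>))"

definition xi_sk :: "('w \<Rightarrow> 'v list) \<Rightarrow> 'w \<Rightarrow> ('g + 'w,'v,'w) itm" where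
  "xi_sk ord \<alpha> = IA (Inr \<alpha>) (map IV (ord \<alpha>))"

definition embed_tm :: "('g,'v,'w) itm \<Rightarrow> ('g + 'w,'v,'w) itm" where
  "embed_tm = map_itm Inl id id"

definition embed_socp :: "('g,'v,'w) constr set \<Rightarrow> ('g + 'w,'v,'w) constr set" where
  "embed_socp = image (map_constr Inl id id)"

definition sk :: "('w \<Rightarrow> 'v list) \<Rightarrow> ('g,'v,'w) constr set \<Rightarrow> ('g + 'w,'v,'w) constr set" where
  "sk ord \<Phi> = {Le (subst (xi_sk ord) (embed_tm a)) (subst (xi_sk ord) (embed_tm b)) | a b. Le a b \<in> \<Phi>}"

end

theory Submission
  imports Defs
begin

text \<open>Soundness is immediate, since the skolem substitution maps \<open>\<alpha>\<close> to a term over exactly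
the variables \<open>SV(\<alpha>)\<close>, which avoids every \<open>i\<close> with \<open>i \<notin> \<alpha>\<close> in \<open>\<Phi>\<close>.
For completeness, interpret \<open>f\<^sub>\<alpha>(x\<^sub>1, \<dots>, x\<^sub>k)\<close> as the value of \<open>\<xi>(\<alpha>)\<close> under the assignment sending the
variables of \<open>SV(\<alpha>)\<close> to \<open>x\<^sub>1, \<dots>, x\<^sub>k\<close> and all other variables to 0; this is monotone because \<open>J\<close> is.
Given a constraint \<open>a \<le> b\<close> and an assignment \<open>\<beta>\<close>, let \<open>\<gamma>\<close> agree with \<open>\<beta>\<close> on \<open>W = Var(a) \<union> \<Union>{V(\<alpha>) | \<alpha> \<in> SOVar(a)}\<close>
and vanish elsewhere. By monotonicity the skolemised left-hand side under \<open>\<beta>\<close> is at most \<open>[a\<xi>]\<^sup>\<gamma>\<close>,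
which is at most \<open>[b\<xi>]\<^sup>\<gamma>\<close> as \<open>(J, \<xi>)\<close> is a model; and since \<open>W \<subseteq> V(\<beta>')\<close> for every \<open>\<beta>' \<in> SOVar(b)\<close> while
\<open>\<xi>(\<beta>')\<close> avoids the variables excluded from \<open>SV(\<beta>')\<close>, the latter is at most the skolemised right-hand side.\<close>

fun eval2 :: "('g \<Rightarrow> nat list \<Rightarrow> nat) \<Rightarrow> ('v \<Rightarrow> nat) \<Rightarrow> ('w \<Rightarrow> nat) \<Rightarrow> ('g,'v,'w) itm \<Rightarrow> nat" where
  "eval2 J \<beta> \<sigma> (IV i) = \<beta> i"
| "eval2 J \<beta> \<sigma> (SOV \<alpha>) = \<sigma> \<alpha>"
| "eval2 J \<beta> \<sigma> IZ = 0"
| "eval2 J \<beta> \<sigma> (IS t) = Suc (eval2 J \<beta> \<sigma> t)"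
| "eval2 J \<beta> \<sigma> (IP s t) = eval2 J \<beta> \<sigma> s + eval2 J \<beta> \<sigma> t"
| "eval2 J \<beta> \<sigma> (IA g ts) = J g (map (eval2 J \<beta> \<sigma>) ts)"

lemma eval_eq_eval2: "eval J \<beta> t = eval2 J \<beta> (\<lambda>_. 0) t"
  by (induction t) (auto cong: map_cong)

lemma eval_subst: "eval J \<beta> (subst \<xi> t) = eval2 J \<beta> (\<lambda>\<alpha>. eval J \<beta> (\<xi> \<alpha>)) t"
  by (induction t) (auto cong: map_cong)

lemma eval_subst_xi_sk_embed_tm:
  "eval J \<beta> (subst (xi_sk ord) (embed_tm t)) =
     eval2 (\<lambda>g. J (Inl g)) \<beta> (\<lambda>\<alpha>. J (Inr \<alpha>) (map \<beta> (ord \<alpha>))) t"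
  unfolding embed_tm_def by (induction t) (auto simp: xi_sk_def cong: map_cong)

lemma eval2_mono:
  assumes "interp ar J" "wf_tm ar t"
    and "\<forall>i\<in>vars t. \<beta> i \<le> \<beta>' i" "\<forall>\<alpha>\<in>sovars t. \<sigma> \<alpha> \<le> \<sigma>' \<alpha>"
  shows "eval2 J \<beta> \<sigma> t \<le> eval2 J \<beta>' \<sigma>' t"
  using assms(2-)
proof (induction t)
  case (IA g ts)
  then have "list_all2 (\<le>) (map (eval2 J \<beta> \<sigma>) ts) (map (eval2 J \<beta>' \<sigma>') ts)"
    by (auto simp: list_all2_conv_all_nth list_all_iff)
  with IA.prems assms(1) show ?case by (auto simp: interp_def)
qed auto

lemma eval_mono:
  "interp ar J \<Longrightarrow> wf_tm ar t \<Longrightarrow> \<forall>i\<in>vars t. \<beta> i \<le> \<beta>' i \<Longrightarrow> eval J \<beta> t \<le> eval J \<beta>' t"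
  unfolding eval_eq_eval2 by (rule eval2_mono) auto

lemma Le_in_embed_socp_iff:
  fixes \<Phi> :: "('g,'v,'w) constr set"
  shows "Le a b \<in> embed_socp \<Phi> \<longleftrightarrow> (\<exists>a0 b0. Le a0 b0 \<in> \<Phi> \<and> a = embed_tm a0 \<and> b = embed_tm b0)"
proof -
  have "Le a b = map_constr Inl id id c \<longleftrightarrow> (\<exists>a0 b0. c = Le a0 b0 \<and> a = embed_tm a0 \<and> b = embed_tm b0)"
    for c :: "('g,'v,'w) constr"
    by (cases c) (auto simp: embed_tm_def)
  then show ?thesis by (simp add: embed_socp_def image_iff) blast
qed

lemma NotIn_in_embed_socp_iff:
  fixes \<Phi> :: "('g,'v,'w) constr set"
  shows "NotIn i \<alpha> \<in> embed_socp \<Phi> \<longleftrightarrow> NotIn i \<alpha> \<in> \<Phi>"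
proof -
  have "(NotIn i \<alpha> :: ('g + 'w,'v,'w) constr) = map_constr Inl id id c \<longleftrightarrow> c = NotIn i \<alpha>"
    for c :: "('g,'v,'w) constr"
    by (cases c) auto
  then show ?thesis by (simp add: embed_socp_def image_iff)
qed

theorem skolemisation_sound:
  assumes "\<forall>\<alpha>. set (ord \<alpha>) \<subseteq> SV \<Phi> \<alpha>" and "fo_models J (sk ord \<Phi>)"
  shows "is_model J (xi_sk ord) (embed_socp \<Phi>)"
  unfolding is_model_def
proof (intro conjI allI impI)
  fix a b
  assume "Le a b \<in> embed_socp \<Phi>"
  with assms(2) show "le_J J (subst (xi_sk ord) a) (subst (xi_sk ord) b)"
    by (auto simp: Le_in_embed_socp_iff fo_models_def sk_def)
next
  fix i \<alpha>
  assume "NotIn i \<alpha> \<in> embed_socp \<Phi>"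
  with assms(1) show "i \<notin> vars (xi_sk ord \<alpha>)"
    by (auto simp: NotIn_in_embed_socp_iff xi_sk_def SV_def)
qed

definition zero_outside :: "'v set \<Rightarrow> ('v \<Rightarrow> nat) \<Rightarrow> 'v \<Rightarrow> nat" where
  "zero_outside S \<beta> i = (if i \<in> S then \<beta> i else 0)"

definition list_assign :: "'v list \<Rightarrow> nat list \<Rightarrow> 'v \<Rightarrow> nat" where
  "list_assign vs xs i = (case map_of (zip vs xs) i of None \<Rightarrow> 0 | Some n \<Rightarrow> n)"

lemma list_assign_map:
  "distinct vs \<Longrightarrow> list_assign vs (map \<beta> vs) = zero_outside (set vs) \<beta>"
  by (auto simp: list_assign_def zero_outside_def map_of_zip_map)

lemma list_assign_mono:
  "list_all2 (\<le>) xs ys \<Longrightarrow> list_assign vs xs i \<le> list_assign vs ys i"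
proof (induction xs ys arbitrary: vs rule: list_all2_induct)
  case (Cons x xs y ys)
  then show ?case by (cases vs) (auto simp: list_assign_def)
qed (simp add: list_assign_def)

definition skolem_interp ::
  "('g \<Rightarrow> nat list \<Rightarrow> nat) \<Rightarrow> ('w \<Rightarrow> ('g,'v,'w) itm) \<Rightarrow> ('w \<Rightarrow> 'v list) \<Rightarrow> 'g + 'w \<Rightarrow> nat list \<Rightarrow> nat"
where
  "skolem_interp J \<xi> ord = case_sum J (\<lambda>\<alpha> xs. eval J (list_assign (ord \<alpha>) xs) (\<xi> \<alpha>))"

lemma skolem_interp_Inl [simp]: "skolem_interp J \<xi> ord (Inl g) = J g"
  by (simp add: skolem_interp_def)

lemma skolem_interp_Inr_map:
  "distinct (ord \<alpha>) \<Longrightarrow>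
   skolem_interp J \<xi> ord (Inr \<alpha>) (map \<beta> (ord \<alpha>)) = eval J (zero_outside (set (ord \<alpha>)) \<beta>) (\<xi> \<alpha>)"
  by (simp add: skolem_interp_def list_assign_map)

lemma interp_skolem_interp:
  assumes "interp ar J" and "so_subst ar \<xi>"
  shows "interp (sk_arity ar ord) (skolem_interp J \<xi> ord)"
  unfolding interp_def
proof (intro allI impI)
  fix g and xs ys :: "nat list"
  assume len: "length xs = sk_arity ar ord g" "length ys = sk_arity ar ord g"
    and le: "list_all2 (\<le>) xs ys"
  show "skolem_interp J \<xi> ord g xs \<le> skolem_interp J \<xi> ord g ys"
  proof (cases g)
    case (Inl h)
    with len have "length xs = ar h" "length ys = ar h" by (simp_all add: sk_arity_def)
    with assms(1) le have "J h xs \<le> J h ys" unfolding interp_def by blast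
    then show ?thesis by (simp add: Inl)
  next
    case (Inr \<alpha>)
    from assms(2) have "wf_tm ar (\<xi> \<alpha>)" by (simp add: so_subst_def)
    then have "eval J (list_assign (ord \<alpha>) xs) (\<xi> \<alpha>) \<le> eval J (list_assign (ord \<alpha>) ys) (\<xi> \<alpha>)"
      by (rule eval_mono[OF assms(1)]) (simp add: list_assign_mono[OF le])
    then show ?thesis by (simp add: Inr skolem_interp_def)
  qed
qed

lemma vars_Vset_lhs_subset:
  assumes "Le a b \<in> \<Phi>" and "\<beta> \<in> sovars b"
  shows "vars a \<union> (\<Union>\<alpha>\<in>sovars a. Vset \<Phi> \<alpha>) \<subseteq> Vset \<Phi> \<beta>"
  using inV.base[OF assms] inV.step[OF assms] by (auto simp: Vset_def)

lemma model_le_restricted: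
  fixes \<beta> :: "'v \<Rightarrow> nat"
  assumes J: "interp ar J" and \<xi>: "so_subst ar \<xi>" and model: "is_model J \<xi> \<Phi>"
    and ab: "Le a b \<in> \<Phi>" and wf: "wf_socp ar \<Phi>"
  defines "\<sigma> \<equiv> \<lambda>\<alpha>. eval J (zero_outside (SV \<Phi> \<alpha>) \<beta>) (\<xi> \<alpha>)"
  shows "eval2 J \<beta> \<sigma> a \<le> eval2 J \<beta> \<sigma> b"
proof -
  define W where "W = vars a \<union> (\<Union>\<alpha>\<in>sovars a. Vset \<Phi> \<alpha>)"
  define \<gamma> where "\<gamma> = zero_outside W \<beta>"
  define \<sigma>\<gamma> where "\<sigma>\<gamma> = (\<lambda>\<alpha>. eval J \<gamma> (\<xi> \<alpha>))"
  from wf ab have wf_ab: "wf_tm ar a" "wf_tm ar b" by (auto simp: wf_socp_def)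
  from \<xi> have wf_\<xi>: "wf_tm ar (\<xi> \<alpha>)" for \<alpha> by (simp add: so_subst_def)
  have "eval2 J \<beta> \<sigma> a \<le> eval2 J \<gamma> \<sigma>\<gamma> a"
  proof (rule eval2_mono[OF J wf_ab(1)])
    show "\<forall>i\<in>vars a. \<beta> i \<le> \<gamma> i" by (simp add: \<gamma>_def W_def zero_outside_def)
    show "\<forall>\<alpha>\<in>sovars a. \<sigma> \<alpha> \<le> \<sigma>\<gamma> \<alpha>"
    proof
      fix \<alpha> assume "\<alpha> \<in> sovars a"
      then have "zero_outside (SV \<Phi> \<alpha>) \<beta> i \<le> \<gamma> i" for i
        by (auto simp: \<gamma>_def W_def SV_def zero_outside_def)
      then show "\<sigma> \<alpha> \<le> \<sigma>\<gamma> \<alpha>"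
        unfolding \<sigma>_def \<sigma>\<gamma>_def by (intro eval_mono[OF J wf_\<xi>]) simp
    qed
  qed
  also have "\<dots> = eval J \<gamma> (subst \<xi> a)" by (simp add: eval_subst \<sigma>\<gamma>_def)
  also have "\<dots> \<le> eval J \<gamma> (subst \<xi> b)" using model ab by (auto simp: is_model_def le_J_def)
  also have "\<dots> = eval2 J \<gamma> \<sigma>\<gamma> b" by (simp add: eval_subst \<sigma>\<gamma>_def)
  also have "\<dots> \<le> eval2 J \<beta> \<sigma> b"
  proof (rule eval2_mono[OF J wf_ab(2)])
    show "\<forall>i\<in>vars b. \<gamma> i \<le> \<beta> i" by (simp add: \<gamma>_def zero_outside_def)
    show "\<forall>\<alpha>\<in>sovars b. \<sigma>\<gamma> \<alpha> \<le> \<sigma> \<alpha>"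
    proof
      fix \<alpha> assume \<alpha>: "\<alpha> \<in> sovars b"
      have "\<gamma> i \<le> zero_outside (SV \<Phi> \<alpha>) \<beta> i" if i: "i \<in> vars (\<xi> \<alpha>)" for i
      proof (cases "i \<in> W")
        case True
        with vars_Vset_lhs_subset[OF ab \<alpha>] have "i \<in> Vset \<Phi> \<alpha>" by (simp add: W_def subset_eq)
        moreover from model i have "NotIn i \<alpha> \<notin> \<Phi>" by (auto simp: is_model_def)
        ultimately show ?thesis by (simp add: \<gamma>_def zero_outside_def SV_def)
      qed (simp add: \<gamma>_def zero_outside_def)
      then show "\<sigma>\<gamma> \<alpha> \<le> \<sigma> \<alpha>"
        unfolding \<sigma>_def \<sigma>\<gamma>_def by (intro eval_mono[OF J wf_\<xi>]) simp
    qed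
  qed
  finally show ?thesis .
qed

theorem skolemisation_complete:
  assumes "interp ar J" "so_subst ar \<xi>" "is_model J \<xi> \<Phi>" "wf_socp ar \<Phi>"
    and ord: "\<forall>\<alpha>. distinct (ord \<alpha>) \<and> set (ord \<alpha>) = SV \<Phi> \<alpha>"
  shows "fo_models (skolem_interp J \<xi> ord) (sk ord \<Phi>)"
  unfolding fo_models_def
proof (intro allI impI)
  fix x y
  assume "Le x y \<in> sk ord \<Phi>"
  then obtain a b where ab: "Le a b \<in> \<Phi>"
    and xy: "x = subst (xi_sk ord) (embed_tm a)" "y = subst (xi_sk ord) (embed_tm b)"
    by (auto simp: sk_def)
  have "eval (skolem_interp J \<xi> ord) \<beta> (subst (xi_sk ord) (embed_tm t)) =
          eval2 J \<beta> (\<lambda>\<alpha>. eval J (zero_outside (SV \<Phi> \<alpha>) \<beta>) (\<xi> \<alpha>)) t" for \<beta> t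
    using ord by (simp add: eval_subst_xi_sk_embed_tm skolem_interp_Inr_map)
  with model_le_restricted[OF assms(1-3) ab assms(4)] show "le_J (skolem_interp J \<xi> ord) x y"
    by (simp add: xy le_J_def)
qed

theorem mainTheorem11:
  fixes \<Phi> :: "('g,'v,'w) constr set" and ar :: "'g \<Rightarrow> nat" and ord :: "'w \<Rightarrow> 'v list"
  assumes wf: "wf_socp ar \<Phi>"
    and ord: "\<forall>\<alpha>. distinct (ord \<alpha>) \<and> set (ord \<alpha>) = SV \<Phi> \<alpha>"
  shows "(\<forall>J. interp (sk_arity ar ord) J \<and> fo_models J (sk ord \<Phi>)
            \<longrightarrow> is_model J (xi_sk ord) (embed_socp \<Phi>))
       \<and> (\<forall>J \<xi>. interp ar J \<and> so_subst ar \<xi> \<and> is_model J \<xi> \<Phi>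
            \<longrightarrow> (\<exists>J'. interp (sk_arity ar ord) J' \<and> (\<forall>g. J' (Inl g) = J g)
                      \<and> fo_models J' (sk ord \<Phi>)))"
proof (intro conjI allI impI)
  fix J :: "'g + 'w \<Rightarrow> nat list \<Rightarrow> nat"
  assume "interp (sk_arity ar ord) J \<and> fo_models J (sk ord \<Phi>)"
  with ord show "is_model J (xi_sk ord) (embed_socp \<Phi>)"
    by (intro skolemisation_sound) auto
next
  fix J \<xi>
  assume "interp ar J \<and> so_subst ar \<xi> \<and> is_model J \<xi> \<Phi>"
  with wf ord show "\<exists>J'. interp (sk_arity ar ord) J' \<and> (\<forall>g. J' (Inl g) = J g)
                      \<and> fo_models J' (sk ord \<Phi>)"
    by (intro exI[of _ "skolem_interp J \<xi> ord"])
       (auto intro: interp_skolem_interp skolemisation_complete)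
qed

end
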